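(* Let $L$ be a positive integer and $A\in\mathbb{Z}_L^{2\times 2}$. Then there exist $s_0,s_1\in\mathbb{Z}_L$, a diagonal matrix $D\in\mathbb{Z}_L^{2\times2}$ and a matrix $V\in\mathbb{Z}_L^{2\times2}$ with $\det(V)=\pm1$ in $\mathbb{Z}_L$, such that $$A=U_{s_0,s_1}DV,\qquad\text{where } U_{s_0,s_1}=S_{-s_1}F^{-1}S_{s_0}F=\begin{pmatrix}1&-s_0\\-s_1&s_0s_1+1\end{pmatrix}.$$
   Context: All matrix arithmetic is modulo $L$. $F=\begin{pmatrix}0&-1\\1&0\end{pmatrix}$ and, for $c\in\mathbb{Z}_L$, $S_c=\begin{pmatrix}1&0\\c&1\end{pmatrix}$. *)

theory Defs
  imports "HOL-Analysis.Analysis" "HOL-Number_Theory.Cong"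
begin

text \<open>Matrices over Z_L are represented by integer matrices (int^2^2),
  with equality in Z_L meaning entrywise congruence modulo L.\<close>

definition mat2 :: "int \<Rightarrow> int \<Rightarrow> int \<Rightarrow> int \<Rightarrow> int^2^2" where
  "mat2 a b c d = (\<chi> i j. if i = 1 then (if j = 1 then a else b)
                           else (if j = 1 then c else d))"

definition cong_mat :: "int \<Rightarrow> int^2^2 \<Rightarrow> int^2^2 \<Rightarrow> bool" where
  "cong_mat L A B \<longleftrightarrow> (\<forall>i j. [A $ i $ j = B $ i $ j] (mod L))"

definition Fm :: "int^2^2" where "Fm = mat2 0 (-1) 1 0"

definition Fm_inv :: "int^2^2" where "Fm_inv = mat2 0 1 (-1) 0"

definition Sm :: "int \<Rightarrow> int^2^2" where "Sm c = mat2 1 0 c 1"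

definition Um :: "int \<Rightarrow> int \<Rightarrow> int^2^2" where
  "Um s0 s1 = Sm (-s1) ** Fm_inv ** Sm s0 ** Fm"

definition diag_mod :: "int \<Rightarrow> int^2^2 \<Rightarrow> bool" where
  "diag_mod L D \<longleftrightarrow> [D $ 1 $ 2 = 0] (mod L) \<and> [D $ 2 $ 1 = 0] (mod L)"

end

theory Submission imports Defs "HOL-Computational_Algebra.Primes" begin

text \<open>Over \<open>\<int>\<close> one puts \<open>A = R D T\<close> in Smith normal form with \<open>det R = det T = 1\<close> and
  \<open>D = diag e\<^sub>1 e\<^sub>2\<close>, \<open>e\<^sub>2 dvd e\<^sub>1\<close>. A shear \<open>R S\<^sub>c\<close> makes the corner entry \<open>p\<close> of \<open>R\<close> a unit
  modulo \<open>L\<close>, and the divisibility lets the compensating shear \<open>S\<^sub>-\<^sub>c\<close> move across \<open>D\<close> into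
  \<open>T\<close>. A matrix of determinant one with invertible corner \<open>p\<close> is \<open>U\<^sub>s\<^sub>0\<^sub>,\<^sub>s\<^sub>1 diag p p\<^sup>-\<^sup>1\<close>,
  and the diagonal factor commutes with \<open>D\<close>, so it is absorbed into \<open>V\<close>.\<close>

lemma exists_coprime_add_mult:
  fixes x y z :: int
  assumes "x \<noteq> 0" and "gcd (gcd x y) z = 1"
  shows "\<exists>k. coprime (y + k * z) x"
proof -
  \<comment> \<open>\<open>k\<close> is the product of the primes of \<open>x\<close> not dividing \<open>y\<close>\<close>
  define S where "S = prime_factors x \<inter> {p. \<not> p dvd y}"
  define k where "k = \<Prod>S"
  have fin: "finite S" unfolding S_def by auto
  have "coprime (y + k * z) x"
  proof (rule ccontr)
    assume "\<not> coprime (y + k * z) x"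
    then obtain r where r: "prime r" "r dvd y + k * z" "r dvd x"
      using prime_factor_int[of "gcd (y + k * z) x"] by (auto simp: coprime_iff_gcd_eq_1)
    show False
    proof (cases "r dvd y")
      case True
      have "\<not> r dvd z"
      proof
        assume "r dvd z"
        then have "r dvd 1" using True r(3) assms(2) by (metis gcd_greatest)
        then show False using r(1) not_prime_unit by blast
      qed
      moreover have "\<not> r dvd k"
      proof
        assume "r dvd k"
        then obtain p where p: "p \<in> S" "r dvd p" unfolding k_def
          using prime_dvd_prod_iff[OF fin r(1), of id] by auto
        then have "prime p" "\<not> p dvd y" unfolding S_def by (auto simp: in_prime_factors_iff)
        then show False using p(2) r(1) True primes_dvd_imp_eq by blast
      qed
      moreover have "r dvd k * z" using r(2) True by (metis add_diff_cancel_left' dvd_diff)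
      ultimately show False using r(1) prime_dvd_mult_iff by blast
    next
      case False
      then have "r \<in> S" unfolding S_def using r assms(1) by (auto simp: in_prime_factors_iff)
      then have "r dvd k" unfolding k_def using dvd_prodI[OF fin \<open>r \<in> S\<close>, of "\<lambda>x. x"] by simp
      then have "r dvd k * z" by simp
      then have "r dvd y" using r(2) by (metis add_diff_cancel_right' dvd_diff)
      then show False using False by simp
    qed
  qed
  then show ?thesis by blast
qed

lemma mat2_nth [simp]:
  "mat2 a b c d $ 1 $ 1 = a" "mat2 a b c d $ 1 $ 2 = b"
  "mat2 a b c d $ 2 $ 1 = c" "mat2 a b c d $ 2 $ 2 = d"
  by (simp_all add: mat2_def)

lemma mat2_cases: obtains a b c d where "M = mat2 a b c d"
proof
  show "M = mat2 (M$1$1) (M$1$2) (M$2$1) (M$2$2)"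
    by (simp add: vec_eq_iff forall_2)
qed

lemma mat2_mult [simp]:
  "mat2 a b c d ** mat2 a' b' c' d' =
   mat2 (a * a' + b * c') (a * b' + b * d') (c * a' + d * c') (c * b' + d * d')"
  by (simp add: vec_eq_iff forall_2 matrix_matrix_mult_def sum_2)

lemma mat2_eq_iff:
  "mat2 a b c d = mat2 a' b' c' d' \<longleftrightarrow> a = a' \<and> b = b' \<and> c = c' \<and> d = d'"
  by (metis mat2_nth)

lemma det_mat2 [simp]: "det (mat2 a b c d) = a * d - b * c"
  by (simp add: det_2)

lemma mat2_one: "mat2 1 0 0 1 = (mat 1 :: int^2^2)"
  by (simp add: vec_eq_iff forall_2 mat_def)

lemma det_one_inverse:
  fixes M :: "int^2^2"
  assumes "det M = 1"
  obtains N where "det N = 1" "N ** M = mat 1" "M ** N = mat 1"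
proof -
  obtain a b c d where M: "M = mat2 a b c d" by (rule mat2_cases)
  have "a * d - b * c = 1" using assms M by simp
  then show ?thesis
    by (intro that[of "mat2 d (-b) (-c) a"]) (simp_all add: M mat2_one[symmetric] algebra_simps)
qed

lemma column_reduction_gcd:
  "\<exists>Q c' d'. det Q = 1 \<and> mat2 a b c d ** Q = mat2 (gcd a b) 0 c' d'"
proof -
  define g where "g = gcd a b"
  show ?thesis
  proof (cases "g = 0")
    case True
    then show ?thesis by (intro exI[of _ "mat2 1 0 0 1"]) (auto simp: g_def)
  next
    case False
    obtain u v where uv: "u * a + v * b = g" using bezout_int g_def by blast
    obtain a1 b1 where ab: "a = g * a1" "b = g * b1"
      unfolding g_def by (metis dvdE gcd_dvd1 gcd_dvd2)
    have "g * (u * a1 + v * b1) = g * 1" using uv by (simp add: ab algebra_simps)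
    then have "u * a1 + v * b1 = 1" using False by simp
    then show ?thesis
      using uv unfolding g_def[symmetric]
      by (intro exI[of _ "mat2 u (-b1) v a1"]) (auto simp: ab algebra_simps)
  qed
qed

lemma smith_normal_form_lower_triangular:
  fixes g1 c d :: int
  assumes "g1 \<noteq> 0"
  shows "\<exists>P Q e n. det P = 1 \<and> det Q = 1 \<and> e dvd n \<and> P ** mat2 g1 0 c d ** Q = mat2 e 0 0 n"
proof -
  define g where "g = gcd (gcd g1 c) d"
  have "g > 0" using assms unfolding g_def by simp
  obtain x y z where xyz: "g1 = g * x" "c = g * y" "d = g * z"
    unfolding g_def by (meson dvd_trans gcd_dvd1 gcd_dvd2 dvdE)
  have "g * gcd (gcd x y) z = gcd (gcd (g * x) (g * y)) (g * z)"
    using \<open>g > 0\<close> by (metis abs_of_pos gcd_mult_distrib_int)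
  also have "\<dots> = g * 1" by (simp only: xyz[symmetric]) (simp add: g_def)
  finally have "gcd (gcd x y) z = 1" using \<open>g > 0\<close> by simp
  moreover have "x \<noteq> 0" using xyz(1) assms by auto
  ultimately obtain k where "coprime (y + k * z) x" using exists_coprime_add_mult by metis
  then obtain s t where st: "s * x + t * (y + k * z) = 1"
    using bezout_int[of x "y + k * z"] by (metis coprime_commute coprime_iff_gcd_eq_1)
  \<comment> \<open>after the shear \<open>S\<^sub>k\<close> the first column is \<open>g\<close> times the coprime pair \<open>(x, y + k z)\<close>\<close>
  define P where "P = mat2 s t (- (y + k * z)) x"
  define Q where "Q = Sm k ** mat2 1 (- t * z) 0 1"
  have "P ** mat2 g1 0 c d ** Q = mat2 g 0 0 (x * g * z)"
    using st unfolding P_def Q_def xyz by (simp add: Sm_def mat2_eq_iff) algebra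
  moreover have "det P = 1" "det Q = 1" using st by (simp_all add: P_def Q_def Sm_def algebra_simps)
  moreover have "g dvd x * g * z" by simp
  ultimately show ?thesis by blast
qed

lemma smith_normal_form_2x2:
  fixes A :: "int^2^2"
  shows "\<exists>P Q e n. det P = 1 \<and> det Q = 1 \<and> e dvd n \<and> P ** A ** Q = mat2 e 0 0 n"
proof -
  obtain a b c d where A: "A = mat2 a b c d" by (rule mat2_cases)
  have reduce: "\<exists>P Q e n. det P = 1 \<and> det Q = 1 \<and> e dvd n \<and> P ** mat2 a' b' c' d' ** Q = mat2 e 0 0 n"
    if nonzero: "gcd a' b' \<noteq> 0" for a' b' c' d' :: int
  proof -
    obtain Q0 c'' d'' where Q0: "det Q0 = 1" "mat2 a' b' c' d' ** Q0 = mat2 (gcd a' b') 0 c'' d''"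
      using column_reduction_gcd by blast
    obtain P Q e n where PQ: "det P = 1" "det Q = 1" "e dvd n"
      "P ** mat2 (gcd a' b') 0 c'' d'' ** Q = mat2 e 0 0 n"
      using smith_normal_form_lower_triangular[OF nonzero] by blast
    have "P ** mat2 a' b' c' d' ** (Q0 ** Q) = mat2 e 0 0 n"
      using PQ(4) Q0(2) by (metis matrix_mul_assoc)
    then show ?thesis using PQ Q0 by (metis det_mul mult_1_left)
  qed
  consider "gcd a b \<noteq> 0" | "gcd c d \<noteq> 0" "a = 0" "b = 0" | "a = 0" "b = 0" "c = 0" "d = 0"
    by fastforce
  then show ?thesis
  proof cases
    case 1
    then show ?thesis using reduce A by blast
  next
    case 2
    then obtain P Q e n where PQ: "det P = 1" "det Q = 1" "e dvd n"
      "P ** (Fm_inv ** A) ** Q = mat2 e 0 0 n"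
      using reduce[of c d 0 0] by (auto simp: A Fm_inv_def)
    moreover have "det (P ** Fm_inv) = 1" using PQ(1) by (simp add: det_mul Fm_inv_def)
    ultimately show ?thesis by (metis matrix_mul_assoc)
  next
    case 3
    then show ?thesis by (intro exI[of _ "mat2 1 0 0 1"]) (auto simp: A)
  qed
qed

lemma smith_factorization_2x2:
  fixes A :: "int^2^2"
  obtains R T e1 e2 where "det R = 1" "det T = 1" "e2 dvd e1" "A = R ** mat2 e1 0 0 e2 ** T"
proof -
  obtain P Q e n where PQ: "det P = 1" "det Q = 1" "e dvd n" "P ** A ** Q = mat2 e 0 0 n"
    using smith_normal_form_2x2 by blast
  obtain P' where P': "det P' = 1" "P' ** P = mat 1" by (rule det_one_inverse[OF PQ(1)])
  obtain Q' where Q': "det Q' = 1" "Q ** Q' = mat 1" by (rule det_one_inverse[OF PQ(2)])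
  have "A = P' ** (P ** A ** Q) ** Q'"
    using P'(2) Q'(2) by (metis matrix_mul_assoc matrix_mul_lid matrix_mul_rid)
  also have "\<dots> = (P' ** Fm) ** mat2 n 0 0 e ** (Fm_inv ** Q')"
  proof -
    have "Fm ** mat2 n 0 0 e ** Fm_inv = mat2 e 0 0 n" by (simp add: Fm_def Fm_inv_def)
    then show ?thesis using PQ(4) by (metis matrix_mul_assoc)
  qed
  finally show ?thesis
    using PQ(3) P'(1) Q'(1) by (intro that) (auto simp: det_mul Fm_def Fm_inv_def)
qed

lemma cong_mat_mat2:
  "cong_mat L (mat2 a b c d) (mat2 a' b' c' d') \<longleftrightarrow>
   [a = a'] (mod L) \<and> [b = b'] (mod L) \<and> [c = c'] (mod L) \<and> [d = d'] (mod L)"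
  by (simp add: cong_mat_def forall_2)

lemma cong_mat_refl: "cong_mat L A A"
  unfolding cong_mat_def by simp

lemma cong_mat_mult:
  "cong_mat L A A' \<Longrightarrow> cong_mat L B B' \<Longrightarrow> cong_mat L (A ** B) (A' ** B')"
  unfolding cong_mat_def matrix_matrix_mult_def by (auto intro!: cong_sum cong_mult)

lemma Um_eq: "Um s0 s1 = mat2 1 (-s0) (-s1) (s0 * s1 + 1)"
  by (simp add: Um_def Sm_def Fm_def Fm_inv_def algebra_simps)

lemma shear_diag_commute: "e1 = e2 * m \<Longrightarrow> Sm c ** mat2 e1 0 0 e2 = mat2 e1 0 0 e2 ** Sm (c * m)"
  by (simp add: Sm_def ac_simps)

lemma shear_corner_coprime:
  fixes R :: "int^2^2"
  assumes "det R = 1" and "L \<noteq> 0"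
  shows "\<exists>c. coprime ((R ** Sm c) $ 1 $ 1) L"
proof -
  obtain p q r s where R: "R = mat2 p q r s" by (rule mat2_cases)
  have "gcd p q dvd p * s - q * r" by (simp add: dvd_diff)
  also have "p * s - q * r = 1" using assms(1) R by simp
  finally have "gcd p q dvd 1" .
  then have "gcd (gcd L p) q = 1"
    by (metis gcd.assoc gcd.commute gcd_dvd2 dvd_trans is_unit_gcd_iff)
  then obtain c where "coprime (p + c * q) L"
    using exists_coprime_add_mult[OF assms(2)] by metis
  then show ?thesis by (auto simp: R Sm_def ac_simps)
qed

lemma cong_Um_diag_of_unit_corner:
  fixes R :: "int^2^2"
  assumes "det R = 1" and "[p * w = 1] (mod L)" and "R $ 1 $ 1 = p"
  shows "cong_mat L R (Um (- R $ 1 $ 2 * p) (- R $ 2 $ 1 * w) ** mat2 p 0 0 w)"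
proof -
  obtain q r s where R: "R = mat2 p q r s" using assms(3) by (metis mat2_cases mat2_nth(1))
  have det: "p * s = q * r + 1" using assms(1) R by simp
  have scale: "[p * w * x = x] (mod L)" for x using cong_scalar_right[OF assms(2)] by simp
  have "[p * w * (q * r * w) + w = q * r * w + w] (mod L)" by (intro cong_add scale cong_refl)
  then have "[q * r * p * w * w + w = (q * r + 1) * w] (mod L)" by (simp add: algebra_simps)
  also have "(q * r + 1) * w = p * w * s" using det by algebra
  also have "[\<dots> = s] (mod L)" by (rule scale)
  finally show ?thesis
    using scale[of q] scale[of r] by (simp add: R Um_eq cong_mat_mat2 cong_sym algebra_simps)
qed

theorem theorem3p5:
  fixes L :: int and A :: "int^2^2"
  assumes "L > 0"
  shows "\<exists>s0 s1 :: int. \<exists>D V :: int^2^2.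
           diag_mod L D \<and>
           ([det V = 1] (mod L) \<or> [det V = -1] (mod L)) \<and>
           cong_mat L A (Um s0 s1 ** D ** V) \<and>
           cong_mat L (Um s0 s1) (mat2 1 (-s0) (-s1) (s0 * s1 + 1))"
proof -
  obtain R T e1 e2 where RT: "det R = 1" "det T = 1" "e2 dvd e1" "A = R ** mat2 e1 0 0 e2 ** T"
    by (rule smith_factorization_2x2)
  obtain m where m: "e1 = e2 * m" using RT(3) by blast
  define D where "D = mat2 e1 0 0 e2"
  obtain c where "coprime ((R ** Sm c) $ 1 $ 1) L" using shear_corner_coprime RT(1) assms by fastforce
  then obtain p w where pw: "(R ** Sm c) $ 1 $ 1 = p" "[p * w = 1] (mod L)"
    by (metis cong_solve_coprime_int)
  define s0 s1 where "s0 = - (R ** Sm c) $ 1 $ 2 * p" and "s1 = - (R ** Sm c) $ 2 $ 1 * w"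
  define V where "V = mat2 p 0 0 w ** Sm (- c * m) ** T"
  have "det (R ** Sm c) = 1" using RT(1) by (simp add: det_mul Sm_def)
  then have U: "cong_mat L (R ** Sm c) (Um s0 s1 ** mat2 p 0 0 w)"
    unfolding s0_def s1_def using cong_Um_diag_of_unit_corner pw by blast
  have "Sm c ** Sm (- c) = mat 1" by (simp add: Sm_def mat2_one[symmetric])
  then have "A = (R ** Sm c) ** (Sm (- c) ** D) ** T"
    using RT(4) by (metis D_def matrix_mul_assoc matrix_mul_rid)
  also have "\<dots> = (R ** Sm c) ** D ** (Sm (- c * m) ** T)"
    using shear_diag_commute[OF m] by (simp add: D_def matrix_mul_assoc)
  finally have "cong_mat L A ((Um s0 s1 ** mat2 p 0 0 w) ** D ** (Sm (- c * m) ** T))"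
    using cong_mat_mult[OF cong_mat_mult[OF U cong_mat_refl] cong_mat_refl] by simp
  also have "\<dots> = Um s0 s1 ** D ** V"
    by (simp add: D_def V_def matrix_mul_assoc[symmetric]) (simp add: matrix_mul_assoc mult.commute)
  finally have "cong_mat L A (Um s0 s1 ** D ** V)" .
  moreover have "[det V = 1] (mod L)" using pw(2) RT(2) by (simp add: V_def det_mul Sm_def)
  moreover have "diag_mod L D" by (simp add: D_def diag_mod_def)
  ultimately show ?thesis unfolding Um_eq[symmetric] using cong_mat_refl by blast
qed

end
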